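(* Let $G=\{1,\dots,n\}$ be a set of generating units with marginal costs $C_1<\dots<C_n$, capacities $\overline P_g\ge 0$, up/down balancing costs $C^{\mathrm u}_g, C^{\mathrm d}_g\in\mathbb{R}$ and balancing limits $R^{\mathrm u}_g,R^{\mathrm d}_g\ge 0$. Let $B$ be a finite set of nodes, $\Lambda$ a finite set of lines with origin $o(l)\in B$, end $e(l)\in B$ and capacity $\overline F_l\ge0$, $G(b)\subseteq G$ the units at node $b$ (the sets $G(b)$ partitioning $G$), and $D(b)$ the loads at node $b$. Let data $\{(\mathbf x_i,(L_{di})_{d})\}_{i=1}^N$ be given with $\mathbf x_i\in\mathbb{R}^p$ and $L_{di}\in\mathbb{R}$. For each $i$ and $\widehat L\in\mathbb R$ define the realized-cost set $T_i(p)$ as the set of $(r^{\mathrm u},r^{\mathrm d},f)\in\mathbb R^n_{\ge0}\times\mathbb R^n_{\ge0}\times\mathbb R^{\Lambda}$ with $0\le p_g+r^{\mathrm u}_g-r^{\mathrm d}_g\le\overline P_g$, $r^{\mathrm u}_g\le R^{\mathrm u}_g$, $r^{\mathrm d}_g\le R^{\mathrm d}_g$ for all $g$, $\sum_{g\in G(b)}(p_g+r^{\mathrm u}_g-r^{\mathrm d}_g)=\sum_{d\in D(b)}L_{di}+\sum_{l:o(l)=b}f_l-\sum_{l:e(l)=b}f_l$ for all $b\in B$, and $|f_l|\le\overline F_l$ for all $l$. (Bilevel problem) Minimize over $\mathbf q\in\mathbb R^p$ and $(p_{\cdot i},r^{\mathrm u}_{\cdot i},r^{\mathrm d}_{\cdot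 i},f_{\cdot i})_{i=1}^N$ the objective $\frac1N\sum_{i=1}^N\sum_{g}(C_gp_{gi}+C^{\mathrm u}_gr^{\mathrm u}_{gi}-C^{\mathrm d}_gr^{\mathrm d}_{gi})$ subject to $(r^{\mathrm u}_{\cdot i},r^{\mathrm d}_{\cdot i},f_{\cdot i})\in T_i(p_{\cdot i})$ and $p_{\cdot i}\in\arg\min\{\sum_gC_gp_g:\sum_gp_g=\mathbf q^\top\mathbf x_i,\ 0\le p_g\le\overline P_g\ \forall g\}$ for all $i$. (Single-level MILP) Minimize the same objective over the same variables together with $u_{gi}\in\{0,1\}$, subject to $(r^{\mathrm u}_{\cdot i},r^{\mathrm d}_{\cdot i},f_{\cdot i})\in T_i(p_{\cdot i})$, $\sum_g p_{gi}=\mathbf q^\top\mathbf x_i$, $u_{1i}\overline P_1\le p_{1i}\le\overline P_1$, $u_{gi}\overline P_g\le p_{gi}\le u_{(g-1)i}\overline P_g$ and $u_{gi}\le u_{(g-1)i}$ for $g\ge2$, for all $i$. Then the feasible set of the bilevel problem equals the projection of the feasible set of the MILP onto the variables $(\mathbf q,p,r^{\mathrm u},r^{\mathrm d},f)$; consequently both problems have the same optimal value, and a vector $\mathbf q$ (together with the remaining variables) is optimal for the bilevel problem if and only if it is (the projection of) an optimal solution of the MILP.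
   Context: This is the training problem for an affine "prescription" $\widehat L=\mathbf q^\top\mathbf x$ of total system net demand used in a two-stage power scheduling: the forward stage dispatches units by cost-merit order to meet $\widehat L$, and the real-time stage adjusts production by up-regulation $r^{\mathrm u}$ and down-regulation $r^{\mathrm d}$ to meet the realized nodal net loads $L_{di}$ over a transport (pipeline) network with line flows $f_l$. Strictly ordered marginal costs $C_1<\dots<C_n$ are assumed so that the forward dispatch problem has a unique optimal solution whenever feasible. *)

theory Defs
  imports "HOL-Analysis.Analysis"
begin

record ('b, 'l, 'd) power_system =
  n_units :: nat
  C  :: "nat \<Rightarrow> real"
  Pmax :: "nat \<Rightarrow> real"
  Cu :: "nat \<Rightarrow> real"
  Cd :: "nat \<Rightarrow> real"
  Ru :: "nat \<Rightarrow> real"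
  Rd :: "nat \<Rightarrow> real"
  nodes :: "'b set"
  lines :: "'l set"
  orig :: "'l \<Rightarrow> 'b"
  dest :: "'l \<Rightarrow> 'b"
  Fmax :: "'l \<Rightarrow> real"
  units_at :: "'b \<Rightarrow> nat set"
  loads_at :: "'b \<Rightarrow> 'd set"

definition units :: "('b, 'l, 'd) power_system \<Rightarrow> nat set" where
  "units S = {1..n_units S}"

definition wf_system :: "('b, 'l, 'd) power_system \<Rightarrow> bool" where
  "wf_system S \<longleftrightarrow>
     (\<forall>g\<in>units S. \<forall>h\<in>units S. g < h \<longrightarrow> C S g < C S h) \<and>
     (\<forall>g\<in>units S. 0 \<le> Pmax S g \<and> 0 \<le> Ru S g \<and> 0 \<le> Rd S g) \<and>
     finite (nodes S) \<and> finite (lines S) \<and>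
     (\<forall>l\<in>lines S. orig S l \<in> nodes S \<and> dest S l \<in> nodes S \<and> 0 \<le> Fmax S l) \<and>
     (\<forall>b\<in>nodes S. units_at S b \<subseteq> units S \<and> finite (loads_at S b)) \<and>
     (\<Union>b\<in>nodes S. units_at S b) = units S \<and>
     (\<forall>b\<in>nodes S. \<forall>b'\<in>nodes S. b \<noteq> b' \<longrightarrow> units_at S b \<inter> units_at S b' = {})"

definition T_set ::
  "('b, 'l, 'd) power_system \<Rightarrow> ('d \<Rightarrow> nat \<Rightarrow> real) \<Rightarrow> nat \<Rightarrow> (nat \<Rightarrow> real)
    \<Rightarrow> ((nat \<Rightarrow> real) \<times> (nat \<Rightarrow> real) \<times> ('l \<Rightarrow> real)) set" where
  "T_set S L i p = {(ru, rd, f).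
     (\<forall>g\<in>units S. 0 \<le> ru g \<and> 0 \<le> rd g \<and>
        0 \<le> p g + ru g - rd g \<and> p g + ru g - rd g \<le> Pmax S g \<and>
        ru g \<le> Ru S g \<and> rd g \<le> Rd S g) \<and>
     (\<forall>b\<in>nodes S. (\<Sum>g\<in>units_at S b. p g + ru g - rd g) =
        (\<Sum>d\<in>loads_at S b. L d i)
        + (\<Sum>l\<in>{l\<in>lines S. orig S l = b}. f l)
        - (\<Sum>l\<in>{l\<in>lines S. dest S l = b}. f l)) \<and>
     (\<forall>l\<in>lines S. \<bar>f l\<bar> \<le> Fmax S l)}"

definition forward_feasible :: "('b, 'l, 'd) power_system \<Rightarrow> real \<Rightarrow> (nat \<Rightarrow> real) \<Rightarrow> bool" where
  "forward_feasible S Lhat p \<longleftrightarrow>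
     (\<Sum>g\<in>units S. p g) = Lhat \<and> (\<forall>g\<in>units S. 0 \<le> p g \<and> p g \<le> Pmax S g)"

definition forward_cost :: "('b, 'l, 'd) power_system \<Rightarrow> (nat \<Rightarrow> real) \<Rightarrow> real" where
  "forward_cost S p = (\<Sum>g\<in>units S. C S g * p g)"

type_synonym ('k, 'l) decision =
  "(real^'k) \<times> (nat \<Rightarrow> nat \<Rightarrow> real) \<times> (nat \<Rightarrow> nat \<Rightarrow> real) \<times> (nat \<Rightarrow> nat \<Rightarrow> real) \<times> ('l \<Rightarrow> nat \<Rightarrow> real)"

text \<open>Decision (q, p, ru, rd, f) with p g i, ru g i, rd g i, f l i.
  Data: N samples, features x i, loads L d i, for i = 1..N.\<close>

definition objective :: "('b, 'l, 'd) power_system \<Rightarrow> nat \<Rightarrow> ('k, 'l) decision \<Rightarrow> real" where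
  "objective S N v = (case v of (q, p, ru, rd, f) \<Rightarrow>
     (1 / real N) * (\<Sum>i=1..N. \<Sum>g\<in>units S. C S g * p g i + Cu S g * ru g i - Cd S g * rd g i))"

definition bilevel_feasible ::
  "('b, 'l, 'd) power_system \<Rightarrow> nat \<Rightarrow> (nat \<Rightarrow> real^'k) \<Rightarrow> ('d \<Rightarrow> nat \<Rightarrow> real)
     \<Rightarrow> ('k, 'l) decision \<Rightarrow> bool" where
  "bilevel_feasible S N x L v = (case v of (q, p, ru, rd, f) \<Rightarrow>
     (\<forall>i\<in>{1..N}.
        ((\<lambda>g. ru g i), (\<lambda>g. rd g i), (\<lambda>l. f l i)) \<in> T_set S L i (\<lambda>g. p g i) \<and>
        is_arg_min (forward_cost S) (forward_feasible S (q \<bullet> x i)) (\<lambda>g. p g i)))"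

definition milp_feasible ::
  "('b, 'l, 'd) power_system \<Rightarrow> nat \<Rightarrow> (nat \<Rightarrow> real^'k) \<Rightarrow> ('d \<Rightarrow> nat \<Rightarrow> real)
     \<Rightarrow> ('k, 'l) decision \<times> (nat \<Rightarrow> nat \<Rightarrow> real) \<Rightarrow> bool" where
  "milp_feasible S N x L w = (case w of ((q, p, ru, rd, f), u) \<Rightarrow>
     (\<forall>i\<in>{1..N}.
        ((\<lambda>g. ru g i), (\<lambda>g. rd g i), (\<lambda>l. f l i)) \<in> T_set S L i (\<lambda>g. p g i) \<and>
        (\<Sum>g\<in>units S. p g i) = q \<bullet> x i \<and>
        (\<forall>g\<in>units S. u g i \<in> {0, 1}) \<and>
        (1 \<in> units S \<longrightarrow> u 1 i * Pmax S 1 \<le> p 1 i \<and> p 1 i \<le> Pmax S 1) \<and>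
        (\<forall>g\<in>units S. 2 \<le> g \<longrightarrow>
            u g i * Pmax S g \<le> p g i \<and> p g i \<le> u (g - 1) i * Pmax S g \<and>
            u g i \<le> u (g - 1) i)))"

end

theory Submission
  imports Defs
begin

(* With strictly increasing marginal costs, a forward dispatch is optimal iff it respects
   merit order: no unit produces while a cheaper unit has spare capacity.  Necessity is an
   exchange argument (shift output to the cheaper unit); sufficiency holds because the cost
   of the marginal unit separates the units any other feasible dispatch raises from those it
   lowers.  The binary variables of the MILP encode merit order exactly: u_g = 1 forces unit g
   to capacity and u_g = 0 forces all later units to zero.  Hence the lower-level argmin
   constraint is equivalent to the existence of such u, the bilevel feasible set is the
   projection of the MILP feasible set, and projection preserves infima and minimizers. *)

lemma finite_units [simp]: "finite (units S)"
  by (simp add: units_def)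

lemma is_arg_min_image_fst:
  assumes proj: "{v. P v} = fst ` {w. Q w}"
  shows "is_arg_min f P v \<longleftrightarrow> (\<exists>w. fst w = v \<and> is_arg_min (\<lambda>w. f (fst w)) Q w)"
proof -
  have P_iff: "P v \<longleftrightarrow> (\<exists>w. Q w \<and> fst w = v)" for v
  proof -
    have "P v \<longleftrightarrow> v \<in> fst ` {w. Q w}"
      using proj by (metis mem_Collect_eq)
    then show ?thesis
      by (simp add: image_iff eq_commute)
  qed
  show ?thesis
    unfolding is_arg_min_def P_iff by (metis (mono_tags, lifting) prod.collapse fst_conv)
qed

lemma sum_mult_nonneg_if_threshold:
  fixes d w :: "'a \<Rightarrow> real"
  assumes "(\<Sum>g\<in>A. d g) = 0"
    and "\<And>g. g \<in> A \<Longrightarrow> d g < 0 \<Longrightarrow> w g \<le> c"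
    and "\<And>g. g \<in> A \<Longrightarrow> d g > 0 \<Longrightarrow> c \<le> w g"
  shows "0 \<le> (\<Sum>g\<in>A. w g * d g)"
proof -
  have "c * d g \<le> w g * d g" if "g \<in> A" for g
  proof (cases "d g < 0")
    case True
    then show ?thesis
      using assms(2)[OF that] by (simp add: mult_right_mono_neg)
  next
    case False
    then show ?thesis
      using assms(3)[OF that] by (cases "d g = 0") (auto intro: mult_right_mono)
  qed
  then have "(\<Sum>g\<in>A. c * d g) \<le> (\<Sum>g\<in>A. w g * d g)"
    by (rule sum_mono)
  then show ?thesis
    using assms(1) by (simp add: sum_distrib_left[symmetric])
qed

lemma wf_system_cost_mono:
  assumes "wf_system S" "g \<in> units S" "h \<in> units S" "g \<le> h"
  shows "C S g \<le> C S h"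
  using assms unfolding wf_system_def by (metis order_le_less order_refl)

definition merit_order :: "('b, 'l, 'd) power_system \<Rightarrow> (nat \<Rightarrow> real) \<Rightarrow> bool" where
  "merit_order S p \<longleftrightarrow>
     (\<forall>g\<in>units S. \<forall>h\<in>units S. g < h \<longrightarrow> p g < Pmax S g \<longrightarrow> p h = 0)"

lemma forward_arg_min_merit_order:
  assumes wf: "wf_system S" and am: "is_arg_min (forward_cost S) (forward_feasible S Lh) p"
  shows "merit_order S p"
  unfolding merit_order_def
proof (intro ballI impI, rule ccontr)
  fix g h
  assume g: "g \<in> units S" and h: "h \<in> units S" and gh: "g < h"
    and spare: "p g < Pmax S g" and "p h \<noteq> 0"
  have feas: "forward_feasible S Lh p"
    using am by (simp add: is_arg_min_def)
  then have "p h > 0"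
    using h \<open>p h \<noteq> 0\<close> by (force simp: forward_feasible_def)
  define e where "e = min (Pmax S g - p g) (p h)"
  have e: "0 < e" "e \<le> Pmax S g - p g" "e \<le> p h"
    using spare \<open>p h > 0\<close> by (auto simp: e_def)
  define p' where "p' = (\<lambda>j. p j + (if j = g then e else 0) - (if j = h then e else 0))"
  have "(\<Sum>j\<in>units S. p' j) = (\<Sum>j\<in>units S. p j) + e - e"
    unfolding p'_def using g h by (simp add: sum.distrib sum_subtractf)
  moreover have "\<forall>j\<in>units S. 0 \<le> p' j \<and> p' j \<le> Pmax S j"
    using feas e gh unfolding p'_def forward_feasible_def by auto
  ultimately have feas': "forward_feasible S Lh p'"
    using feas by (simp add: forward_feasible_def)
  have "forward_cost S p' = (\<Sum>j\<in>units S. C S j * p j + (if j = g then C S j * e else 0)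
                                 - (if j = h then C S j * e else 0))"
    unfolding forward_cost_def p'_def by (rule sum.cong) (auto simp: algebra_simps)
  also have "\<dots> = forward_cost S p + C S g * e - C S h * e"
    unfolding forward_cost_def using g h
    by (simp only: sum.distrib sum_subtractf) (simp add: sum.delta)
  finally have "forward_cost S p' = forward_cost S p + C S g * e - C S h * e" .
  moreover have "C S g * e < C S h * e"
    using wf g h gh e(1) by (auto simp: wf_system_def)
  ultimately have "forward_cost S p' < forward_cost S p"
    by linarith
  with feas' am show False
    by (auto simp: is_arg_min_def)
qed

lemma merit_order_threshold:
  assumes wf: "wf_system S" and feas: "forward_feasible S Lh p" and mo: "merit_order S p"
    and feas_q: "forward_feasible S Lh q"
  obtains c where "\<And>g. g \<in> units S \<Longrightarrow> q g < p g \<Longrightarrow> C S g \<le> c"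
    and "\<And>g. g \<in> units S \<Longrightarrow> p g < q g \<Longrightarrow> c \<le> C S g"
proof (cases "\<exists>g\<in>units S. p g < Pmax S g")
  case True
  define k where "k = (LEAST g. g \<in> units S \<and> p g < Pmax S g)"
  have k: "k \<in> units S" "p k < Pmax S k"
    using True unfolding k_def by (metis (mono_tags, lifting) LeastI)+
  have below_full: "p g = Pmax S g" if "g \<in> units S" "g < k" for g
    using not_less_Least[of g] that feas unfolding k_def by (force simp: forward_feasible_def)
  have above_off: "p g = 0" if "g \<in> units S" "k < g" for g
    using mo k that unfolding merit_order_def by blast
  show ?thesis
  proof (rule that[of "C S k"])
    fix g assume "g \<in> units S" "q g < p g"
    then have "g \<le> k"
      using above_off[of g] feas_q by (force simp: forward_feasible_def)
    then show "C S g \<le> C S k"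
      using wf_system_cost_mono[OF wf \<open>g \<in> units S\<close> k(1)] by simp
  next
    fix g assume "g \<in> units S" "p g < q g"
    then have "k \<le> g"
      using below_full[of g] feas_q by (force simp: forward_feasible_def)
    then show "C S k \<le> C S g"
      using wf_system_cost_mono[OF wf k(1) \<open>g \<in> units S\<close>] by simp
  qed
next
  case False
  \<comment> \<open>Every unit is at capacity, so no dispatch raises any unit: any upper bound of the costs will do.\<close>
  show ?thesis
  proof (rule that[of "\<Sum>h\<in>units S. \<bar>C S h\<bar>"])
    fix g assume "g \<in> units S"
    then have "\<bar>C S g\<bar> \<le> (\<Sum>h\<in>units S. \<bar>C S h\<bar>)"
      by (intro member_le_sum) auto
    then show "C S g \<le> (\<Sum>h\<in>units S. \<bar>C S h\<bar>)"
      by linarith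
  next
    fix g assume "g \<in> units S" "p g < q g"
    with False feas_q show "(\<Sum>h\<in>units S. \<bar>C S h\<bar>) \<le> C S g"
      by (force simp: forward_feasible_def)
  qed
qed

lemma merit_order_forward_arg_min:
  assumes wf: "wf_system S" and feas: "forward_feasible S Lh p" and mo: "merit_order S p"
  shows "is_arg_min (forward_cost S) (forward_feasible S Lh) p"
  unfolding is_arg_min_def
proof (intro conjI feas notI)
  assume "\<exists>q. forward_feasible S Lh q \<and> forward_cost S q < forward_cost S p"
  then obtain q where feas_q: "forward_feasible S Lh q"
    and cheaper: "forward_cost S q < forward_cost S p" by blast
  obtain c where "\<And>g. g \<in> units S \<Longrightarrow> q g < p g \<Longrightarrow> C S g \<le> c"
    and "\<And>g. g \<in> units S \<Longrightarrow> p g < q g \<Longrightarrow> c \<le> C S g"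
    using merit_order_threshold[OF wf feas mo feas_q] by blast
  moreover have "(\<Sum>g\<in>units S. q g - p g) = 0"
    using feas feas_q by (simp add: sum_subtractf forward_feasible_def)
  ultimately have "0 \<le> (\<Sum>g\<in>units S. C S g * (q g - p g))"
    by (intro sum_mult_nonneg_if_threshold[where c = c]) auto
  then have "forward_cost S p \<le> forward_cost S q"
    by (simp add: forward_cost_def right_diff_distrib sum_subtractf)
  with cheaper show False
    by simp
qed

lemma forward_arg_min_iff_merit_order:
  assumes "wf_system S"
  shows "is_arg_min (forward_cost S) (forward_feasible S Lh) p \<longleftrightarrow>
           forward_feasible S Lh p \<and> merit_order S p"
  by (metis assms forward_arg_min_merit_order merit_order_forward_arg_min is_arg_min_def)

definition status_feasible ::
  "('b, 'l, 'd) power_system \<Rightarrow> (nat \<Rightarrow> real) \<Rightarrow> (nat \<Rightarrow> real) \<Rightarrow> bool" where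
  "status_feasible S p u \<longleftrightarrow> (\<forall>g\<in>units S. u g \<in> {0, 1}) \<and>
     (1 \<in> units S \<longrightarrow> u 1 * Pmax S 1 \<le> p 1 \<and> p 1 \<le> Pmax S 1) \<and>
     (\<forall>g\<in>units S. 2 \<le> g \<longrightarrow>
        u g * Pmax S g \<le> p g \<and> p g \<le> u (g - 1) * Pmax S g \<and> u g \<le> u (g - 1))"

lemma milp_feasible_iff_status_feasible:
  "milp_feasible S N x L ((q, p, ru, rd, f), u) \<longleftrightarrow>
     (\<forall>i\<in>{1..N}. ((\<lambda>g. ru g i), (\<lambda>g. rd g i), (\<lambda>l. f l i)) \<in> T_set S L i (\<lambda>g. p g i) \<and>
        (\<Sum>g\<in>units S. p g i) = q \<bullet> x i \<and> status_feasible S (\<lambda>g. p g i) (\<lambda>g. u g i))"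
  by (simp add: milp_feasible_def status_feasible_def)

lemma status_feasible_antimono:
  assumes "status_feasible S p u" "g \<in> units S" "h \<in> units S" "g \<le> h"
  shows "u h \<le> u g"
  using assms(4,3)
proof (induction h rule: dec_induct)
  case (step h)
  then have "Suc h \<in> units S" "2 \<le> Suc h"
    using assms(2) by (auto simp: units_def)
  then have "u (Suc h) \<le> u h"
    using assms(1) unfolding status_feasible_def by fastforce
  moreover have "h \<in> units S"
    using step.hyps assms(2) \<open>Suc h \<in> units S\<close> by (auto simp: units_def)
  ultimately show ?case
    using step.IH by simp
qed simp

lemma status_feasible_lower:
  assumes "status_feasible S p u" "g \<in> units S"
  shows "u g * Pmax S g \<le> p g"
  using assms by (cases "g = 1") (auto simp: status_feasible_def units_def)

lemma status_feasible_bounds: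
  assumes wf: "wf_system S" and st: "status_feasible S p u" and g: "g \<in> units S"
  shows "0 \<le> p g \<and> p g \<le> Pmax S g"
proof -
  have "u g \<in> {0, 1}" "0 \<le> Pmax S g"
    using st wf g by (auto simp: status_feasible_def wf_system_def)
  then have "0 \<le> p g"
    using status_feasible_lower[OF st g] by (auto intro: order_trans)
  moreover have "p g \<le> Pmax S g"
  proof (cases "g = 1")
    case False
    then have "2 \<le> g" "g - 1 \<in> units S"
      using g by (auto simp: units_def)
    then have "p g \<le> u (g - 1) * Pmax S g" "u (g - 1) \<in> {0, 1}"
      using st g by (auto simp: status_feasible_def)
    with \<open>0 \<le> Pmax S g\<close> show ?thesis
      by auto
  qed (use st g in \<open>simp add: status_feasible_def\<close>)
  ultimately show ?thesis ..
qed

lemma status_feasible_merit_order: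
  assumes wf: "wf_system S" and st: "status_feasible S p u"
  shows "merit_order S p"
  unfolding merit_order_def
proof (intro ballI impI)
  fix g h assume g: "g \<in> units S" and h: "h \<in> units S" and "g < h" and spare: "p g < Pmax S g"
  have "u g \<in> {0, 1}"
    using st g by (simp add: status_feasible_def)
  then have "u g = 0"
    using status_feasible_lower[OF st g] spare by auto
  have "2 \<le> h" "h - 1 \<in> units S" "g \<le> h - 1"
    using g h \<open>g < h\<close> by (auto simp: units_def)
  then have "u (h - 1) \<le> u g" "u (h - 1) \<in> {0, 1}" "p h \<le> u (h - 1) * Pmax S h"
    using status_feasible_antimono[OF st g] st h by (auto simp: status_feasible_def)
  then have "p h \<le> 0"
    using \<open>u g = 0\<close> by auto
  then show "p h = 0"
    using status_feasible_bounds[OF wf st h] by simp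
qed

definition commitment_of :: "('b, 'l, 'd) power_system \<Rightarrow> (nat \<Rightarrow> real) \<Rightarrow> nat \<Rightarrow> real" where
  "commitment_of S p g = (if \<forall>h\<in>units S. h \<le> g \<longrightarrow> p h = Pmax S h then 1 else 0)"

lemma merit_order_status_feasible:
  assumes feas: "forward_feasible S Lh p" and mo: "merit_order S p"
  shows "status_feasible S p (commitment_of S p)"
proof -
  have "p g \<le> commitment_of S p (g - 1) * Pmax S g" if g: "g \<in> units S" "2 \<le> g" for g
  proof (cases "\<forall>h\<in>units S. h \<le> g - 1 \<longrightarrow> p h = Pmax S h")
    case True
    then show ?thesis
      using feas g by (auto simp: commitment_of_def forward_feasible_def)
  next
    case False
    then obtain h where h: "h \<in> units S" "h \<le> g - 1" "p h \<noteq> Pmax S h"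
      by blast
    then have "p h < Pmax S h"
      using feas by (force simp: forward_feasible_def)
    then have "p g = 0"
      using mo h g unfolding merit_order_def by force
    moreover have "commitment_of S p (g - 1) = 0"
      using False unfolding commitment_of_def by (simp only: if_False)
    ultimately show ?thesis
      by simp
  qed
  then show ?thesis
    using feas by (auto simp: status_feasible_def commitment_of_def forward_feasible_def)
qed

lemma status_feasible_forward_arg_min:
  assumes wf: "wf_system S" and st: "status_feasible S p u" and "(\<Sum>g\<in>units S. p g) = Lh"
  shows "is_arg_min (forward_cost S) (forward_feasible S Lh) p"
proof (rule merit_order_forward_arg_min[OF wf])
  show "forward_feasible S Lh p"
    using assms(3) status_feasible_bounds[OF wf st] by (simp add: forward_feasible_def)
  show "merit_order S p"
    by (rule status_feasible_merit_order[OF wf st])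
qed

lemma forward_arg_min_status_feasible:
  assumes wf: "wf_system S" and "is_arg_min (forward_cost S) (forward_feasible S Lh) p"
  shows "(\<Sum>g\<in>units S. p g) = Lh \<and> status_feasible S p (commitment_of S p)"
  using assms(2) merit_order_status_feasible
  unfolding forward_arg_min_iff_merit_order[OF wf] forward_feasible_def by blast

lemma bilevel_feasible_eq_image_fst_milp:
  assumes wf: "wf_system S"
  shows "{v. bilevel_feasible S N x L v} = fst ` {w. milp_feasible S N x L w}"
proof (intro equalityI subsetI)
  fix v assume "v \<in> {v. bilevel_feasible S N x L v}"
  then obtain q p ru rd f where v: "v = (q, p, ru, rd, f)"
    and "bilevel_feasible S N x L (q, p, ru, rd, f)"
    by (cases v) auto
  then have "milp_feasible S N x L ((q, p, ru, rd, f), \<lambda>g i. commitment_of S (\<lambda>g. p g i) g)"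
    unfolding milp_feasible_iff_status_feasible bilevel_feasible_def
    using forward_arg_min_status_feasible[OF wf] by blast
  then show "v \<in> fst ` {w. milp_feasible S N x L w}"
    using v by force
next
  fix v assume "v \<in> fst ` {w. milp_feasible S N x L w}"
  then obtain q p ru rd f u where v: "v = (q, p, ru, rd, f)"
    and "milp_feasible S N x L ((q, p, ru, rd, f), u)"
    by force
  then have "bilevel_feasible S N x L (q, p, ru, rd, f)"
    unfolding milp_feasible_iff_status_feasible bilevel_feasible_def
    using status_feasible_forward_arg_min[OF wf] by blast
  then show "v \<in> {v. bilevel_feasible S N x L v}"
    using v by simp
qed

theorem mainTheorem2:
  fixes S :: "('b, 'l, 'd) power_system"
    and N :: nat
    and x :: "nat \<Rightarrow> real^'k"
    and L :: "'d \<Rightarrow> nat \<Rightarrow> real"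
  assumes "wf_system S"
    and "1 \<le> N"
  shows "{v. bilevel_feasible S N x L v} = fst ` {w. milp_feasible S N x L w} \<and>
         (INF v\<in>{v. bilevel_feasible S N x L v}. objective S N v)
           = (INF w\<in>{w. milp_feasible S N x L w}. objective S N (fst w)) \<and>
         (\<forall>v. is_arg_min (objective S N) (bilevel_feasible S N x L) v \<longleftrightarrow>
           (\<exists>w. fst w = v \<and> is_arg_min (\<lambda>w. objective S N (fst w)) (milp_feasible S N x L) w))"
proof -
  have proj: "{v. bilevel_feasible S N x L v} = fst ` {w. milp_feasible S N x L w}"
    using bilevel_feasible_eq_image_fst_milp[OF assms(1)] .
  then have "(INF v\<in>{v. bilevel_feasible S N x L v}. objective S N v)
               = (INF w\<in>{w. milp_feasible S N x L w}. objective S N (fst w))"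
    by (simp add: image_image)
  with proj show ?thesis
    using is_arg_min_image_fst[OF proj] by blast
qed

end
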